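(* In a public goods economy (as in the context), if an outcome $\mathbf{a}$ is Pareto efficient, then every deviation $\mathbf{a}'$ from $\mathbf{a}$ (for any coalition) satisfies $\mathbf{a}'\lneq\mathbf{a}$.
   Context: Agents $N=\{1,\dots,n\}$; outcomes are vectors in $[0,1]^n$. Vector orderings: $\mathbf{x}\ge\mathbf{y}$ means $x_i\ge y_i$ for all $i$; $\mathbf{x}>\mathbf{y}$ means $x_i>y_i$ for all $i$; $\mathbf{x}\gneq\mathbf{y}$ means $\mathbf{x}\ge\mathbf{y}$ and $x_j>y_j$ for some $j$ (and $\mathbf{x}\lneq\mathbf{y}$ means $\mathbf{y}\gneq\mathbf{x}$). For $C\subseteq N$, $\mathbf{v}_C$ is the restriction of $\mathbf{v}$ to coordinates in $C$. The utility function $\mathbf{u}:[0,1]^n\to[0,1]^n$ is continuous, concave, and has positive externalities: whenever $\mathbf{a}\gneq\mathbf{a}'$ and $a_i=a'_i$, then $u_i(\mathbf{a})>u_i(\mathbf{a}')$. A coalition is a nonempty $C\subseteq N$; $\mathbf{a}'$ is a deviation from $\mathbf{a}$ for $C$ if $\mathbf{a}'_{N\setminus C}=\mathbf{0}$ and $\mathbf{u}_C(\mathbf{a}')>\mathbf{u}_C(\mathbf{a})$. $\mathbf{a}$ is Pareto efficient if there is no outcome $\mathbf{a}''$ with $\mathbf{u}(\mathbf{a}'')\gneq\mathbf{u}(\mathbf{a})$. *)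

theory Defs
  imports "HOL-Analysis.Analysis"
begin

text \<open>Agents are the elements of a finite type 'n; outcomes are vectors in [0,1]^n.\<close>

definition outcomes :: "(real ^ 'n) set" where
  "outcomes = {a. \<forall>i. 0 \<le> a $ i \<and> a $ i \<le> 1}"

definition vge :: "real ^ 'n \<Rightarrow> real ^ 'n \<Rightarrow> bool" where
  "vge x y \<longleftrightarrow> (\<forall>i. x $ i \<ge> y $ i)"

definition vgt :: "real ^ 'n \<Rightarrow> real ^ 'n \<Rightarrow> bool" where
  "vgt x y \<longleftrightarrow> (\<forall>i. x $ i > y $ i)"

definition vgneq :: "real ^ 'n \<Rightarrow> real ^ 'n \<Rightarrow> bool" where
  "vgneq x y \<longleftrightarrow> vge x y \<and> (\<exists>j. x $ j > y $ j)"

definition public_goods_utility :: "(real ^ 'n \<Rightarrow> real ^ 'n) \<Rightarrow> bool" where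
  "public_goods_utility u \<longleftrightarrow>
     u ` outcomes \<subseteq> outcomes \<and>
     continuous_on outcomes u \<and>
     (\<forall>i. concave_on outcomes (\<lambda>a. u a $ i)) \<and>
     (\<forall>a\<in>outcomes. \<forall>a'\<in>outcomes. \<forall>i. vgneq a a' \<and> a $ i = a' $ i \<longrightarrow> u a $ i > u a' $ i)"

definition is_deviation :: "(real ^ 'n \<Rightarrow> real ^ 'n) \<Rightarrow> 'n set \<Rightarrow> real ^ 'n \<Rightarrow> real ^ 'n \<Rightarrow> bool" where
  "is_deviation u C a a' \<longleftrightarrow> a' \<in> outcomes \<and> (\<forall>j. j \<notin> C \<longrightarrow> a' $ j = 0) \<and>
      (\<forall>i\<in>C. u a' $ i > u a $ i)"

definition pareto_efficient :: "(real ^ 'n \<Rightarrow> real ^ 'n) \<Rightarrow> real ^ 'n \<Rightarrow> bool" where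
  "pareto_efficient u a \<longleftrightarrow> (\<nexists>a''. a'' \<in> outcomes \<and> vgneq (u a'') (u a))"

end

theory Submission
  imports Defs
begin

text \<open>If a deviation a' were not below a, the componentwise maximum of a and a' would be an
  outcome strictly above a. By positive externalities every agent whose contribution it
  leaves unchanged is strictly better off, and every other agent contributes as in a' and so
  is at least as well off as under a', hence strictly better off than under a: the agent
  must belong to the coalition, since outside it a' contributes nothing. This contradicts
  Pareto efficiency of a; and a' \<noteq> a because the coalition strictly prefers a'.\<close>

lemma vgneq_iff_vge_neq: "vgneq x y \<longleftrightarrow> vge x y \<and> x \<noteq> y"
  unfolding vgneq_def vge_def by (metis order_less_le vec_eq_iff)

lemma vge_max_left: "vge (\<chi> i. max (x $ i) (y $ i)) x"
  and vge_max_right: "vge (\<chi> i. max (x $ i) (y $ i)) y"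
  unfolding vge_def by auto

lemma max_in_outcomes:
  assumes "x \<in> outcomes" "y \<in> outcomes"
  shows "(\<chi> i. max (x $ i) (y $ i)) \<in> outcomes"
  using assms unfolding outcomes_def by (simp add: le_max_iff_disj)

lemma public_goods_utility_mono:
  assumes "public_goods_utility u" "x \<in> outcomes" "y \<in> outcomes"
    and "vge x y" "x $ i = y $ i"
  shows "u y $ i \<le> u x $ i"
proof (cases "x = y")
  case False
  then have "vgneq x y" using assms(4) by (simp add: vgneq_iff_vge_neq)
  then show ?thesis
    using assms unfolding public_goods_utility_def by (meson less_imp_le)
qed simp

lemma pareto_efficient_deviation_below:
  assumes u: "public_goods_utility u" and a: "a \<in> outcomes"
    and pe: "pareto_efficient u a" and dev: "is_deviation u C a a'"
  shows "vge a a'"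
proof (rule ccontr)
  assume "\<not> vge a a'"
  then obtain j where j: "a $ j < a' $ j" unfolding vge_def by (meson not_le)
  have a': "a' \<in> outcomes" and outside: "\<And>k. k \<notin> C \<Longrightarrow> a' $ k = 0"
    and better: "\<And>k. k \<in> C \<Longrightarrow> u a $ k < u a' $ k"
    using dev unfolding is_deviation_def by auto
  define b where "b = (\<chi> i. max (a $ i) (a' $ i))"
  have b: "b \<in> outcomes" using max_in_outcomes[OF a a'] by (simp add: b_def)
  have "vgneq b a"
    unfolding vgneq_def using vge_max_left j by (auto simp: b_def intro!: exI[of _ j])
  have "u a $ k < u b $ k" for k
  proof (cases "a' $ k \<le> a $ k")
    case True
    then have "b $ k = a $ k" by (simp add: b_def)
    then show ?thesis
      using u \<open>vgneq b a\<close> b a unfolding public_goods_utility_def by blast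
  next
    case False
    have "0 \<le> a $ k" using a unfolding outcomes_def by simp
    with False outside have "k \<in> C" by force
    have "b $ k = a' $ k" using False by (simp add: b_def)
    then have "u a' $ k \<le> u b $ k"
      using public_goods_utility_mono[OF u b a'] vge_max_right[of a a'] by (simp add: b_def)
    with better[OF \<open>k \<in> C\<close>] show ?thesis by simp
  qed
  then have "vgneq (u b) (u a)" unfolding vgneq_def vge_def by (meson less_imp_le)
  with pe b show False unfolding pareto_efficient_def by blast
qed

theorem lemma1:
  fixes u :: "real ^ 'n \<Rightarrow> real ^ 'n" and a :: "real ^ 'n"
  assumes "public_goods_utility u"
    and "a \<in> outcomes"
    and "pareto_efficient u a"
  shows "\<forall>C a'. C \<noteq> {} \<and> is_deviation u C a a' \<longrightarrow> vgneq a a'"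
proof (intro allI impI)
  fix C a'
  assume dev: "C \<noteq> {} \<and> is_deviation u C a a'"
  have "vge a a'" using pareto_efficient_deviation_below assms dev by blast
  moreover obtain c where "c \<in> C" using dev by auto
  with dev have "u a $ c < u a' $ c" unfolding is_deviation_def by blast
  then have "a \<noteq> a'" by auto
  ultimately show "vgneq a a'" by (simp add: vgneq_iff_vge_neq)
qed

end
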